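(* Let $V$ be a vector space. For sentences $S=S_1|\cdots|S_n$ and $W=W_1|\cdots|W_k$ in $T(T(V)_+)$ with all $S_i,W_j\in T(V)_+$ and $n,k\ge1$: $S*W=\sum_{f}\big(S_1*W_{f^{-1}(\{1\})}\big)|\cdots|\big(S_n*W_{f^{-1}(\{n\})}\big)$, where the sum runs over all injective maps $f:\{1,\dots,k\}\hookrightarrow\{1,\dots,n\}$ (so the sum is $0$ if $k>n$).
   Context: $T(V)_+=\bigoplus_{n\ge1}V^{\otimes n}$ with $*$ the concatenation product of $T(V)$. $T(T(V)_+)$ is the tensor Hopf algebra on $T(V)_+$ (sentences), product $|$, elements of $T(V)_+$ primitive. For $I=\{i_1<\dots<i_l\}\subseteq\{1,\dots,k\}$, $W_I=W_{i_1}|\cdots|W_{i_l}$, and $W_\emptyset=1$. The product $*$ is extended to $T(T(V)_+)$ as the unique bilinear map with, for all $f,g,h\in T(T(V)_+)$ and $y\in T(V)_+$: $\varepsilon(f*g)=\varepsilon(f)\varepsilon(g)$; $\Delta(f*g)=\Delta(f)*\Delta(g)$; $f*1=f$; $1*f=\varepsilon(f)1$; $f*(g|y)=(f*g)*y-f*(g*y)$; $(f|g)*h=(f*h^{(1)})|(g*h^{(2)})$; $(f*g)*h=f*\big((g*h^{(1)})|h^{(2)}\big)$. *)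

theory Defs
  imports "HOL-Library.FuncSet"
begin

text \<open>
  V is the free vector space over a field 'k with basis 'a (every vector space
  has a basis). T(V) is represented by finitely supported coefficient functions on
  words ('a list), T(V)_+ by those vanishing on the empty word. T(T(V)_+) is
  represented by finitely supported coefficient functions on sentences
  ('a list list) supported on sentences all of whose words are nonempty.
  Tensors in T(T(V)_+) (x) T(T(V)_+) are coefficient functions on pairs of sentences.
\<close>

type_synonym ('a,'k) tv = "'a list \<Rightarrow> 'k"
type_synonym ('a,'k) tt = "'a list list \<Rightarrow> 'k"
type_synonym ('a,'k) tt2 = "'a list list \<times> 'a list list \<Rightarrow> 'k"

definition fsupp :: "('b \<Rightarrow> 'k::zero) \<Rightarrow> bool" where
  "fsupp f \<longleftrightarrow> finite {s. f s \<noteq> 0}"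

definition TVp :: "('a,'k::zero) tv set" where
  "TVp = {w. fsupp w \<and> w [] = 0}"

definition TTp :: "('a,'k::zero) tt set" where
  "TTp = {x. fsupp x \<and> (\<forall>s. x s \<noteq> 0 \<longrightarrow> (\<forall>w\<in>set s. w \<noteq> []))}"

definition vadd :: "('b \<Rightarrow> 'k::comm_ring_1) \<Rightarrow> ('b \<Rightarrow> 'k) \<Rightarrow> 'b \<Rightarrow> 'k" where
  "vadd f g = (\<lambda>s. f s + g s)"
definition vsub :: "('b \<Rightarrow> 'k::comm_ring_1) \<Rightarrow> ('b \<Rightarrow> 'k) \<Rightarrow> 'b \<Rightarrow> 'k" where
  "vsub f g = (\<lambda>s. f s - g s)"
definition vsmul :: "'k::comm_ring_1 \<Rightarrow> ('b \<Rightarrow> 'k) \<Rightarrow> 'b \<Rightarrow> 'k" where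
  "vsmul c f = (\<lambda>s. c * f s)"
definition vzero :: "'b \<Rightarrow> 'k::comm_ring_1" where
  "vzero = (\<lambda>s. 0)"
definition vsum :: "('i \<Rightarrow> 'b \<Rightarrow> 'k::comm_ring_1) \<Rightarrow> 'i set \<Rightarrow> 'b \<Rightarrow> 'k" where
  "vsum F I = (\<lambda>s. \<Sum>i\<in>I. F i s)"

definition delta :: "'b \<Rightarrow> 'b \<Rightarrow> 'k::comm_ring_1" where
  "delta b = (\<lambda>s. if s = b then 1 else 0)"

definition tvcat :: "('a,'k::comm_ring_1) tv \<Rightarrow> ('a,'k) tv \<Rightarrow> ('a,'k) tv" where
  "tvcat u w = (\<lambda>x. \<Sum>i\<le>length x. u (take i x) * w (drop i x))"

definition bar :: "('a,'k::comm_ring_1) tt \<Rightarrow> ('a,'k) tt \<Rightarrow> ('a,'k) tt" where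
  "bar f g = (\<lambda>u. \<Sum>i\<le>length u. f (take i u) * g (drop i u))"

definition one :: "('a,'k::comm_ring_1) tt" where
  "one = delta []"

definition eps :: "('a,'k::comm_ring_1) tt \<Rightarrow> 'k" where
  "eps f = f []"

definition emb :: "('a,'k::comm_ring_1) tv \<Rightarrow> ('a,'k) tt" where
  "emb w = (\<lambda>s. case s of [v] \<Rightarrow> w v | _ \<Rightarrow> 0)"

text \<open>Interleaving of p and q according to the position set I of p\<close>
definition merge :: "nat set \<Rightarrow> 'b list \<Rightarrow> 'b list \<Rightarrow> 'b list" where
  "merge I p q = map (\<lambda>i. if i \<in> I then p ! card {j\<in>I. j < i}
                                   else q ! card {j. j < i \<and> j \<notin> I})
                     [0..<length p + length q]"

text \<open>Deshuffle coproduct of the tensor Hopf algebra T(T(V)_+) (words of T(V)_+ primitive)\<close>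
definition Delta :: "('a,'k::comm_ring_1) tt \<Rightarrow> ('a,'k) tt2" where
  "Delta x = (\<lambda>(p,q). \<Sum>I\<in>{I. I \<subseteq> {..<length p + length q} \<and> card I = length p}.
                        x (merge I p q))"

definition tens :: "('a,'k::comm_ring_1) tt \<Rightarrow> ('a,'k) tt \<Rightarrow> ('a,'k) tt2" where
  "tens f g = (\<lambda>(p,q). f p * g q)"

text \<open>Sweedler-type expansion: for a finitely supported tensor X = sum of X(p,q) p (x) q,
  tsum X F = sum of X(p,q) F(p,q), F evaluated on the basis sentences.\<close>
definition tsum :: "('a,'k::comm_ring_1) tt2 \<Rightarrow> (('a,'k) tt \<Rightarrow> ('a,'k) tt \<Rightarrow> ('b \<Rightarrow> 'k)) \<Rightarrow> 'b \<Rightarrow> 'k" where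
  "tsum X F = vsum (\<lambda>pq. vsmul (X pq) (F (delta (fst pq)) (delta (snd pq)))) {pq. X pq \<noteq> 0}"

definition is_star_ext :: "(('a,'k::comm_ring_1) tt \<Rightarrow> ('a,'k) tt \<Rightarrow> ('a,'k) tt) \<Rightarrow> bool" where
  "is_star_ext st \<longleftrightarrow>
    (\<forall>f\<in>TTp. \<forall>g\<in>TTp. st f g \<in> TTp) \<and>
    (\<forall>f\<in>TTp. \<forall>g\<in>TTp. \<forall>h\<in>TTp. \<forall>c.
        st (vadd (vsmul c f) g) h = vadd (vsmul c (st f h)) (st g h) \<and>
        st h (vadd (vsmul c f) g) = vadd (vsmul c (st h f)) (st h g)) \<and>
    (\<forall>u\<in>TVp. \<forall>w\<in>TVp. st (emb u) (emb w) = emb (tvcat u w)) \<and>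
    (\<forall>f\<in>TTp. \<forall>g\<in>TTp. eps (st f g) = eps f * eps g) \<and>
    (\<forall>f\<in>TTp. \<forall>g\<in>TTp. Delta (st f g) =
        tsum (Delta f) (\<lambda>a b. tsum (Delta g) (\<lambda>c d. tens (st a c) (st b d)))) \<and>
    (\<forall>f\<in>TTp. st f one = f) \<and>
    (\<forall>f\<in>TTp. st one f = vsmul (eps f) one) \<and>
    (\<forall>f\<in>TTp. \<forall>g\<in>TTp. \<forall>y\<in>TVp.
        st f (bar g (emb y)) = vsub (st (st f g) (emb y)) (st f (st g (emb y)))) \<and>
    (\<forall>f\<in>TTp. \<forall>g\<in>TTp. \<forall>h\<in>TTp.
        st (bar f g) h = tsum (Delta h) (\<lambda>a b. bar (st f a) (st g b))) \<and>
    (\<forall>f\<in>TTp. \<forall>g\<in>TTp. \<forall>h\<in>TTp.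
        st (st f g) h = st f (tsum (Delta h) (\<lambda>a b. bar (st g a) b)))"

definition bars :: "('a,'k::comm_ring_1) tt list \<Rightarrow> ('a,'k) tt" where
  "bars xs = foldr bar xs one"

definition W_sub :: "(nat \<Rightarrow> ('a,'k::comm_ring_1) tv) \<Rightarrow> nat set \<Rightarrow> ('a,'k) tt" where
  "W_sub W I = bars (map (\<lambda>j. emb (W j)) (sorted_list_of_set I))"

end

theory Submission
  imports Defs
begin

(* The word y = W_{k+1} is primitive, so right multiplication by y is a
   derivation of |: (S_1|...|S_n) * y is the sum over i of the sentences in which S_i is
   replaced by S_i * y. Hence in the recursion S*(g|y) = (S*g)*y - S*(g*y), g = W_1|...|W_k,
   the term (S*g)*y lets y be absorbed, in the summand of S*g indexed by an injection phi,
   by any of its n factors. Absorption by a factor outside the image of phi gives exactly the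
   summands indexed by the injections of {1..k+1}; absorption by the factor phi(j) gives the
   summand indexed by phi of S*(W_1|...|W_j*y|...|W_k), and these cancel against S*(g*y). *)

section \<open>Cauchy product on words\<close>

definition conv :: "('b list \<Rightarrow> 'k::comm_ring_1) \<Rightarrow> ('b list \<Rightarrow> 'k) \<Rightarrow> 'b list \<Rightarrow> 'k" where
  "conv u w = (\<lambda>x. \<Sum>i\<le>length x. u (take i x) * w (drop i x))"

lemma tvcat_eq_conv: "tvcat = conv"
  by (simp add: fun_eq_iff tvcat_def conv_def)

lemma bar_eq_conv: "bar = conv"
  by (simp add: fun_eq_iff bar_def conv_def)

lemma sum_atMost_triangle_shift:
  "(\<Sum>i\<le>n. \<Sum>j\<le>i. g j i) = (\<Sum>j\<le>n. \<Sum>l\<le>n - j. g j (j + l::nat))"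
proof (induction n)
  case (Suc n)
  have "(\<Sum>j\<le>n. \<Sum>l\<le>Suc n - j. g j (j + l)) = (\<Sum>j\<le>n. (\<Sum>l\<le>n - j. g j (j + l)) + g j (Suc n))"
  proof (rule sum.cong)
    fix j assume "j \<in> {..n}"
    then have "Suc n - j = Suc (n - j)" "j + Suc (n - j) = Suc n" by auto
    then show "(\<Sum>l\<le>Suc n - j. g j (j + l)) = (\<Sum>l\<le>n - j. g j (j + l)) + g j (Suc n)" by simp
  qed simp
  then show ?case using Suc by (simp add: sum.distrib add.assoc)
qed simp

lemma conv_assoc:
  fixes a b c :: "'b list \<Rightarrow> 'k::comm_ring_1"
  shows "conv (conv a b) c = conv a (conv b c)"
proof
  fix x :: "'b list"
  let ?N = "length x"
  have "conv (conv a b) c x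
      = (\<Sum>i\<le>?N. \<Sum>j\<le>i. a (take j x) * b (take (i - j) (drop j x)) * c (drop i x))"
    unfolding conv_def by (auto simp: sum_distrib_right min_def take_take drop_take intro!: sum.cong)
  also have "\<dots> = (\<Sum>j\<le>?N. \<Sum>l\<le>?N - j. a (take j x) * b (take l (drop j x)) * c (drop (j + l) x))"
    by (subst sum_atMost_triangle_shift) simp
  also have "\<dots> = conv a (conv b c) x"
    unfolding conv_def by (auto simp: sum_distrib_left mult.assoc add.commute intro!: sum.cong)
  finally show "conv (conv a b) c x = conv a (conv b c) x" .
qed

lemma conv_delta_Nil_left: "conv (delta []) w = w"
proof
  fix x
  show "conv (delta []) w x = w x"
    by (cases x) (simp_all add: conv_def delta_def sum.atMost_Suc_shift del: sum.atMost_Suc)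
qed

lemma conv_delta_Nil_right: "conv w (delta []) = w"
proof
  fix x
  have "conv w (delta []) x = (\<Sum>i\<le>length x. if i = length x then w x else 0)"
    unfolding conv_def delta_def by (intro sum.cong) auto
  then show "conv w (delta []) x = w x" by simp
qed

lemma conv_nonzeroD: "conv u w x \<noteq> 0 \<Longrightarrow> \<exists>i. u (take i x) \<noteq> 0 \<and> w (drop i x) \<noteq> 0"
  unfolding conv_def by (metis (no_types, lifting) mult_not_zero sum.neutral)

lemma fsupp_conv:
  assumes "fsupp u" "fsupp w"
  shows "fsupp (conv u w)"
proof -
  have "{x. conv u w x \<noteq> 0} \<subseteq> (\<lambda>(a, b). a @ b) ` ({a. u a \<noteq> 0} \<times> {b. w b \<noteq> 0})"
  proof
    fix x assume "x \<in> {x. conv u w x \<noteq> 0}"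
    then obtain i where "u (take i x) \<noteq> 0" "w (drop i x) \<noteq> 0" using conv_nonzeroD by blast
    then show "x \<in> (\<lambda>(a, b). a @ b) ` ({a. u a \<noteq> 0} \<times> {b. w b \<noteq> 0})"
      by (intro image_eqI[of _ _ "(take i x, drop i x)"]) auto
  qed
  moreover have "finite ((\<lambda>(a, b). a @ b) ` ({a. u a \<noteq> 0} \<times> {b. w b \<noteq> 0}))"
    using assms unfolding fsupp_def by simp
  ultimately show ?thesis
    unfolding fsupp_def by (rule finite_subset)
qed

lemma TTpI: "fsupp x \<Longrightarrow> (\<And>s w. x s \<noteq> 0 \<Longrightarrow> w \<in> set s \<Longrightarrow> w \<noteq> []) \<Longrightarrow> x \<in> TTp"
  unfolding TTp_def by auto

lemma TTpD: "x \<in> TTp \<Longrightarrow> fsupp x" "x \<in> TTp \<Longrightarrow> x s \<noteq> 0 \<Longrightarrow> w \<in> set s \<Longrightarrow> w \<noteq> []"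
  unfolding TTp_def by auto

lemma TTp_support_mono:
  assumes "g \<in> TTp" "\<And>s. f s \<noteq> 0 \<Longrightarrow> g s \<noteq> 0"
  shows "f \<in> TTp"
proof (rule TTpI)
  have "{s. f s \<noteq> 0} \<subseteq> {s. g s \<noteq> 0}" using assms(2) by blast
  then show "fsupp f"
    using TTpD(1)[OF assms(1)] unfolding fsupp_def by (rule finite_subset)
next
  fix s w assume "f s \<noteq> 0" "w \<in> set s"
  then show "w \<noteq> []" using TTpD(2)[OF assms(1)] assms(2) by blast
qed

lemma tvcat_TVp: "u \<in> TVp \<Longrightarrow> w \<in> TVp \<Longrightarrow> tvcat u w \<in> TVp"
  using fsupp_conv[of u w] unfolding TVp_def tvcat_eq_conv by (simp add: conv_def)

lemma vzero_TTp: "vzero \<in> TTp"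
  by (rule TTpI) (auto simp: fsupp_def vzero_def)

lemma one_TTp: "one \<in> TTp"
  by (rule TTpI) (auto simp: fsupp_def one_def delta_def split: if_splits)

lemma delta_TTp: "v \<noteq> [] \<Longrightarrow> delta [v] \<in> TTp"
  by (rule TTpI) (auto simp: fsupp_def delta_def split: if_splits)

lemma vsmul_TTp: "f \<in> TTp \<Longrightarrow> vsmul c f \<in> TTp"
  by (erule TTp_support_mono) (auto simp: vsmul_def)

lemma vadd_TTp:
  assumes "f \<in> TTp" "g \<in> TTp"
  shows "vadd f g \<in> TTp"
proof (rule TTpI)
  have "{s. vadd f g s \<noteq> 0} \<subseteq> {s. f s \<noteq> 0} \<union> {s. g s \<noteq> 0}"
    by (auto simp: vadd_def)
  then show "fsupp (vadd f g)"
    using TTpD(1)[OF assms(1)] TTpD(1)[OF assms(2)] unfolding fsupp_def by (simp add: finite_subset)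
next
  fix s w assume "vadd f g s \<noteq> 0" "w \<in> set s"
  then have "f s \<noteq> 0 \<or> g s \<noteq> 0" by (auto simp: vadd_def)
  then show "w \<noteq> []"
    using TTpD(2)[OF assms(1)] TTpD(2)[OF assms(2)] \<open>w \<in> set s\<close> by blast
qed

lemma vsum_TTp: "(\<And>a. a \<in> A \<Longrightarrow> F a \<in> TTp) \<Longrightarrow> vsum F A \<in> TTp"
proof (induction A rule: infinite_finite_induct)
  case (insert a A)
  have "vsum F (insert a A) = vadd (F a) (vsum F A)"
    using insert.hyps by (simp add: fun_eq_iff vsum_def vadd_def)
  then show ?case by (simp add: vadd_TTp insert.IH insert.prems)
qed (simp_all add: vsum_def vzero_TTp[unfolded vzero_def])

lemma vsum_cong: "A = B \<Longrightarrow> (\<And>a. a \<in> B \<Longrightarrow> F a = G a) \<Longrightarrow> vsum F A = vsum G B"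
  by (simp add: vsum_def fun_eq_iff)

lemma vsum_atLeastAtMost_Suc: "vsum F {1..Suc m} = vadd (vsum F {1..m}) (F (Suc m))"
  by (simp add: fun_eq_iff vsum_def vadd_def)

lemma emb_nonzeroD: "emb y s \<noteq> 0 \<Longrightarrow> \<exists>v. s = [v]"
  by (cases s rule: remdups_adj.cases) (auto simp: emb_def)

lemma emb_TTp:
  assumes "w \<in> TVp"
  shows "emb w \<in> TTp"
proof (rule TTpI)
  have "{s. emb w s \<noteq> 0} \<subseteq> (\<lambda>v. [v]) ` {v. w v \<noteq> 0}"
  proof
    fix s assume "s \<in> {s. emb w s \<noteq> 0}"
    moreover obtain v where "s = [v]" using calculation emb_nonzeroD by blast
    ultimately show "s \<in> (\<lambda>v. [v]) ` {v. w v \<noteq> 0}" by (simp add: emb_def)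
  qed
  then show "fsupp (emb w)"
    using assms unfolding TVp_def fsupp_def by (auto intro: finite_subset)
next
  fix s v assume "emb w s \<noteq> 0" "v \<in> set s"
  moreover obtain u where "s = [u]" using calculation(1) emb_nonzeroD by blast
  ultimately show "v \<noteq> []"
    using assms by (auto simp: emb_def TVp_def)
qed

lemma emb_eq_vsum_delta:
  assumes "y \<in> TVp"
  shows "emb y = vsum (\<lambda>v. vsmul (y v) (delta [v])) {v. y v \<noteq> 0}"
proof
  fix s
  have fin: "finite {v. y v \<noteq> 0}" using assms by (simp add: TVp_def fsupp_def)
  show "emb y s = vsum (\<lambda>v. vsmul (y v) (delta [v])) {v. y v \<noteq> 0} s"
  proof (cases s rule: remdups_adj.cases)
    case (2 u)
    have "(\<Sum>v | y v \<noteq> 0. y v * (if [u] = [v] then 1 else 0)) = (\<Sum>v | y v \<noteq> 0. if v = u then y v else 0)"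
      by (intro sum.cong) auto
    then show ?thesis using 2 fin by (simp add: emb_def vsum_def vsmul_def delta_def sum.delta')
  qed (auto simp: emb_def vsum_def vsmul_def delta_def)
qed

lemma bar_one_left: "bar one f = f"
  unfolding bar_eq_conv one_def by (rule conv_delta_Nil_left)

lemma bar_one_right: "bar f one = f"
  unfolding bar_eq_conv one_def by (rule conv_delta_Nil_right)

lemma bar_assoc: "bar (bar f g) h = bar f (bar g h)"
  unfolding bar_eq_conv by (rule conv_assoc)

lemma tvcat_assoc: "tvcat (tvcat f g) h = tvcat f (tvcat g h)"
  unfolding tvcat_eq_conv by (rule conv_assoc)

lemma bar_TTp:
  assumes "f \<in> TTp" "g \<in> TTp"
  shows "bar f g \<in> TTp"
proof (rule TTpI)
  show "fsupp (bar f g)" using assms TTpD(1) fsupp_conv bar_eq_conv by metis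
next
  fix s w assume "bar f g s \<noteq> 0" "w \<in> set s"
  then obtain i where i: "f (take i s) \<noteq> 0" "g (drop i s) \<noteq> 0"
    using conv_nonzeroD bar_eq_conv by metis
  have "w \<in> set (take i s) \<or> w \<in> set (drop i s)"
    using \<open>w \<in> set s\<close> by (metis Un_iff append_take_drop_id set_append)
  then show "w \<noteq> []" using i assms TTpD(2) by metis
qed

lemma bar_vsum_left: "bar (vsum g A) h = vsum (\<lambda>a. bar (g a) h) A"
  by (simp add: fun_eq_iff bar_def vsum_def sum_distrib_right sum.swap[of _ A])

lemma bar_vsum_right: "bar h (vsum g A) = vsum (\<lambda>a. bar h (g a)) A"
  by (simp add: fun_eq_iff bar_def vsum_def sum_distrib_left sum.swap[of _ A])

lemma bar_vsmul_left: "bar (vsmul c f) h = vsmul c (bar f h)"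
  by (simp add: fun_eq_iff bar_def vsmul_def sum_distrib_left mult.assoc)

lemma bar_vsmul_right: "bar h (vsmul c f) = vsmul c (bar h f)"
  by (simp add: fun_eq_iff bar_def vsmul_def sum_distrib_left mult.left_commute)

lemma bars_append: "bars (xs @ ys) = bar (bars xs) (bars ys)"
  by (induction xs) (simp_all add: bars_def bar_one_left bar_assoc)

lemma bars_singleton: "bars [x] = x"
  by (simp add: bars_def bar_one_right)

lemma bars_TTp: "(\<And>x. x \<in> set xs \<Longrightarrow> x \<in> TTp) \<Longrightarrow> bars xs \<in> TTp"
  by (induction xs) (simp_all add: bars_def one_TTp bar_TTp)

definition sentence :: "(nat \<Rightarrow> ('a,'k::comm_ring_1) tv) \<Rightarrow> nat \<Rightarrow> ('a,'k) tt" where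
  "sentence X m = bars (map (\<lambda>i. emb (X i)) [1..<m+1])"

lemma sentence_0: "sentence X 0 = one"
  by (simp add: sentence_def bars_def)

lemma sentence_Suc: "sentence X (Suc m) = bar (sentence X m) (emb (X (Suc m)))"
  by (simp add: sentence_def bars_append bars_singleton)

lemma sentence_cong: "(\<And>i. i \<in> {1..m} \<Longrightarrow> X i = X' i) \<Longrightarrow> sentence X m = sentence X' m"
  unfolding sentence_def by (intro arg_cong[where f = bars] map_cong) auto

lemma sentence_TTp: "(\<And>i. i \<in> {1..m} \<Longrightarrow> X i \<in> TVp) \<Longrightarrow> sentence X m \<in> TTp"
  unfolding sentence_def by (rule bars_TTp) (auto intro: emb_TTp)

section \<open>Words of T(V)_+ are primitive\<close>

lemma Delta_emb_eq_0:
  assumes "length p + length q \<noteq> 1"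
  shows "Delta (emb y) (p, q) = 0"
  unfolding Delta_def
proof (simp, rule sum.neutral, rule ballI)
  fix I
  have "length (merge I p q) \<noteq> 1" using assms by (simp add: merge_def)
  then show "emb y (merge I p q) = 0" using emb_nonzeroD by fastforce
qed

lemma Delta_emb_left: "Delta (emb y) ([v], []) = y v"
proof -
  have "{I. I \<subseteq> {..<length [v] + length []} \<and> card I = length [v]} = {{0::nat}}"
    by (auto simp: subset_singleton_iff lessThan_Suc)
  then show ?thesis by (simp add: Delta_def merge_def emb_def)
qed

lemma Delta_emb_right: "Delta (emb y) ([], [v]) = y v"
proof -
  have "{I. I \<subseteq> {..<length [] + length [v]} \<and> card I = length []} = {{}::nat set}"
    by (auto simp: subset_singleton_iff lessThan_Suc)
  then show ?thesis by (simp add: Delta_def merge_def emb_def)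
qed

lemma Delta_emb_support:
  "{pq. Delta (emb y) pq \<noteq> 0} = (\<lambda>v. ([v], [])) ` {v. y v \<noteq> 0} \<union> (\<lambda>v. ([], [v])) ` {v. y v \<noteq> 0}"
proof (intro equalityI subsetI)
  fix pq assume "pq \<in> {pq. Delta (emb y) pq \<noteq> 0}"
  then obtain p q where pq: "pq = (p, q)" "Delta (emb y) (p, q) \<noteq> 0" by (cases pq) auto
  then have "length p + length q = 1" using Delta_emb_eq_0 by blast
  then have "(\<exists>v. p = [v] \<and> q = []) \<or> (\<exists>v. p = [] \<and> q = [v])"
    by (cases p; cases q) auto
  then show "pq \<in> (\<lambda>v. ([v], [])) ` {v. y v \<noteq> 0} \<union> (\<lambda>v. ([], [v])) ` {v. y v \<noteq> 0}"
    using pq by (auto simp: Delta_emb_left Delta_emb_right)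
qed (auto simp: Delta_emb_left Delta_emb_right)

lemma tsum_Delta_emb:
  assumes "y \<in> TVp"
  shows "tsum (Delta (emb y)) F =
    vadd (vsum (\<lambda>v. vsmul (y v) (F (delta [v]) one)) {v. y v \<noteq> 0})
         (vsum (\<lambda>v. vsmul (y v) (F one (delta [v]))) {v. y v \<noteq> 0})"
proof
  fix s
  let ?Y = "{v. y v \<noteq> 0}"
  let ?g = "\<lambda>pq. Delta (emb y) pq * F (delta (fst pq)) (delta (snd pq)) s"
  have fin: "finite ?Y" using assms by (simp add: TVp_def fsupp_def)
  have "tsum (Delta (emb y)) F s = sum ?g ((\<lambda>v. ([v], [])) ` ?Y \<union> (\<lambda>v. ([], [v])) ` ?Y)"
    by (simp add: tsum_def vsum_def vsmul_def Delta_emb_support)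
  also have "\<dots> = sum ?g ((\<lambda>v. ([v], [])) ` ?Y) + sum ?g ((\<lambda>v. ([], [v])) ` ?Y)"
    by (rule sum.union_disjoint) (use fin in auto)
  also have "\<dots> = (\<Sum>v\<in>?Y. ?g ([v], [])) + (\<Sum>v\<in>?Y. ?g ([], [v]))"
    by (simp add: sum.reindex inj_on_def)
  finally show "tsum (Delta (emb y)) F s =
      vadd (vsum (\<lambda>v. vsmul (y v) (F (delta [v]) one)) ?Y) (vsum (\<lambda>v. vsmul (y v) (F one (delta [v]))) ?Y) s"
    by (simp add: vadd_def vsum_def vsmul_def Delta_emb_left Delta_emb_right one_def)
qed

lemma linear_vsum:
  fixes L :: "('a,'k::comm_ring_1) tt \<Rightarrow> 'b \<Rightarrow> 'k"
  assumes lin: "\<And>c f g. f \<in> TTp \<Longrightarrow> g \<in> TTp \<Longrightarrow> L (vadd (vsmul c f) g) = vadd (vsmul c (L f)) (L g)"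
    and "finite A" "\<And>a. a \<in> A \<Longrightarrow> g a \<in> TTp"
  shows "L (vsum (\<lambda>a. vsmul (c a) (g a)) A) = vsum (\<lambda>a. vsmul (c a) (L (g a))) A"
  using assms(2,3)
proof (induction A rule: finite_induct)
  case empty
  have "L vzero = L (vadd (vsmul (-1) vzero) vzero)"
    by (simp add: fun_eq_iff vadd_def vsmul_def vzero_def)
  also have "\<dots> = vadd (vsmul (-1) (L vzero)) (L vzero)"
    by (rule lin[OF vzero_TTp vzero_TTp])
  finally show ?case by (simp add: fun_eq_iff vadd_def vsmul_def vsum_def vzero_def)
next
  case (insert a A)
  have sum_insert: "\<And>h. vsum (\<lambda>a. vsmul (c a) (h a)) (insert a A)
      = vadd (vsmul (c a) (h a)) (vsum (\<lambda>a. vsmul (c a) (h a)) A)"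
    using insert.hyps by (simp add: fun_eq_iff vsum_def vadd_def)
  have "vsum (\<lambda>a. vsmul (c a) (g a)) A \<in> TTp"
    using insert.prems by (auto intro!: vsum_TTp vsmul_TTp)
  then have "L (vsum (\<lambda>a. vsmul (c a) (g a)) (insert a A))
      = vadd (vsmul (c a) (L (g a))) (L (vsum (\<lambda>a. vsmul (c a) (g a)) A))"
    unfolding sum_insert using insert.prems by (intro lin) auto
  then show ?case
    unfolding sum_insert using insert.prems by (simp add: insert.IH)
qed

lemma linear_vsum_simple:
  fixes L :: "('a,'k::comm_ring_1) tt \<Rightarrow> 'b \<Rightarrow> 'k"
  assumes "\<And>c f g. f \<in> TTp \<Longrightarrow> g \<in> TTp \<Longrightarrow> L (vadd (vsmul c f) g) = vadd (vsmul c (L f)) (L g)"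
    and "finite A" "\<And>a. a \<in> A \<Longrightarrow> g a \<in> TTp"
  shows "L (vsum g A) = vsum (\<lambda>a. L (g a)) A"
proof -
  have one: "\<And>h. vsum (\<lambda>a. vsmul 1 (h a)) A = vsum h A"
    by (simp add: fun_eq_iff vsum_def vsmul_def)
  have "L (vsum (\<lambda>a. vsmul 1 (g a)) A) = vsum (\<lambda>a. vsmul 1 (L (g a))) A"
    by (rule linear_vsum[where L = L]) (fact assms)+
  then show ?thesis unfolding one .
qed

section \<open>Injections and absorption of the W_j into the S_i\<close>

definition inj_funcset :: "'a set \<Rightarrow> 'b set \<Rightarrow> ('a \<Rightarrow> 'b) set" where
  "inj_funcset A B = {f. f \<in> A \<rightarrow>\<^sub>E B \<and> inj_on f A}"

lemma finite_inj_funcset: "finite A \<Longrightarrow> finite B \<Longrightarrow> finite (inj_funcset A B)"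
  unfolding inj_funcset_def by (rule finite_subset[OF _ finite_PiE]) auto

lemma inj_funcset_empty: "inj_funcset {} B = {\<lambda>_. undefined}"
  by (simp add: inj_funcset_def)

lemma bij_betw_inj_funcset_insert:
  assumes "x \<notin> A"
  shows "bij_betw (\<lambda>(f, b). f(x := b)) (SIGMA f:inj_funcset A B. B - f ` A) (inj_funcset (insert x A) B)"
proof (rule bij_betw_byWitness[where f' = "\<lambda>g. (g(x := undefined), g x)"])
  have "f x = undefined" if "f \<in> inj_funcset A B" for f
    using that assms by (intro PiE_arb[of f A "\<lambda>_. B"]) (simp_all add: inj_funcset_def)
  then show "\<forall>a\<in>SIGMA f:inj_funcset A B. B - f ` A. (\<lambda>g. (g(x := undefined), g x)) ((\<lambda>(f, b). f(x := b)) a) = a"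
    by (auto simp: fun_upd_idem)
  show "(\<lambda>(f, b). f(x := b)) ` (SIGMA f:inj_funcset A B. B - f ` A) \<subseteq> inj_funcset (insert x A) B"
    using assms by (auto simp: inj_funcset_def inj_on_insert intro!: PiE_fun_upd inj_on_fun_updI split: if_split_asm)
  show "(\<lambda>g. (g(x := undefined), g x)) ` inj_funcset (insert x A) B \<subseteq> (SIGMA f:inj_funcset A B. B - f ` A)"
  proof clarify
    fix g assume "g \<in> inj_funcset (insert x A) B"
    then have "g \<in> insert x A \<rightarrow>\<^sub>E B" "inj_on g (insert x A)" by (auto simp: inj_funcset_def)
    moreover have "(g(x := undefined)) ` A = g ` A" using assms by auto
    moreover have "inj_on (g(x := undefined)) A \<longleftrightarrow> inj_on g A" using assms by (intro inj_on_cong) auto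
    ultimately show "g(x := undefined) \<in> inj_funcset A B \<and> g x \<in> B - (g(x := undefined)) ` A"
      using assms by (auto simp: inj_funcset_def fun_upd_in_PiE inj_on_insert)
  qed
qed simp

lemma sum_inj_funcset_insert:
  assumes "finite A" "finite B" "x \<notin> A"
  shows "(\<Sum>g\<in>inj_funcset (insert x A) B. h g) = (\<Sum>f\<in>inj_funcset A B. \<Sum>b\<in>B - f ` A. h (f(x := b)))"
  by (simp add: sum.reindex_bij_betw[OF bij_betw_inj_funcset_insert[OF assms(3)], symmetric]
      sum.Sigma finite_inj_funcset assms(1,2) split_def)

text \<open>The i-th factor S_i * W_{f^{-1}(i)} of a summand, computed in T(V)_+; the empty
  product W_{emptyset} = 1 leaves S_i unchanged.\<close>

definition attach :: "('j \<Rightarrow> ('a,'k::comm_ring_1) tv) \<Rightarrow> ('i \<Rightarrow> ('a,'k) tv) \<Rightarrow> 'i set \<Rightarrow> ('i \<Rightarrow> 'j) \<Rightarrow> 'j \<Rightarrow> ('a,'k) tv" where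
  "attach S W A f i = (if i \<in> f ` A then tvcat (S i) (W (inv_into A f i)) else S i)"

lemma attach_TVp:
  assumes "S i \<in> TVp" "\<And>j. j \<in> A \<Longrightarrow> W j \<in> TVp"
  shows "attach S W A f i \<in> TVp"
proof (cases "i \<in> f ` A")
  case True
  then have "inv_into A f i \<in> A" by (rule inv_into_into)
  then show ?thesis using True assms by (simp add: attach_def tvcat_TVp)
qed (simp add: attach_def assms(1))

lemma attach_fresh:
  assumes "inj_on f A" "x \<notin> A" "i \<notin> f ` A"
  shows "(attach S W A f)(i := tvcat (attach S W A f i) (W x)) = attach S W (insert x A) (f(x := i))"
proof
  fix l
  have inj: "inj_on (f(x := i)) (insert x A)"
    using assms by (auto intro: inj_on_fun_updI)
  have inv_new: "inv_into (insert x A) (f(x := i)) i = x"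
    using inj by (rule inv_into_f_eq) auto
  have inv_old: "inv_into (insert x A) (f(x := i)) (f j) = inv_into A f (f j)" if "j \<in> A" for j
    using that assms inj by (auto intro!: inv_into_f_eq simp: inv_into_f_f)
  show "((attach S W A f)(i := tvcat (attach S W A f i) (W x))) l = attach S W (insert x A) (f(x := i)) l"
    using assms inv_new inv_old by (auto simp: attach_def)
qed

lemma attach_image:
  assumes "inj_on f A" "j \<in> A"
  shows "(attach S W A f)(f j := tvcat (attach S W A f (f j)) y) = attach S (W(j := tvcat (W j) y)) A f"
proof
  fix l
  have "inv_into A f l \<noteq> j" if "l \<in> f ` A" "l \<noteq> f j"
    using that by (metis f_inv_into_f)
  then show "((attach S W A f)(f j := tvcat (attach S W A f (f j)) y)) l = attach S (W(j := tvcat (W j) y)) A f l"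
    using assms by (auto simp: attach_def inv_into_f_f tvcat_assoc)
qed

lemma sum_absorb_into_attach:
  fixes h :: "('j \<Rightarrow> ('a,'k::comm_ring_1) tv) \<Rightarrow> 'c::comm_monoid_add"
  assumes "finite A" "finite B" "x \<notin> A"
  shows "(\<Sum>f\<in>inj_funcset A B. \<Sum>i\<in>B. h ((attach S W A f)(i := tvcat (attach S W A f i) (W x))))
       = (\<Sum>g\<in>inj_funcset (insert x A) B. h (attach S W (insert x A) g))
         + (\<Sum>j\<in>A. \<Sum>f\<in>inj_funcset A B. h (attach S (W(j := tvcat (W j) (W x))) A f))"
proof -
  let ?T = "\<lambda>f i. h ((attach S W A f)(i := tvcat (attach S W A f i) (W x)))"
  have sum_over_B: "(\<Sum>i\<in>B. ?T f i) = (\<Sum>i\<in>B - f ` A. h (attach S W (insert x A) (f(x := i))))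
      + (\<Sum>j\<in>A. h (attach S (W(j := tvcat (W j) (W x))) A f))"
    if f: "f \<in> inj_funcset A B" for f
  proof -
    have inj: "inj_on f A" and sub: "f ` A \<subseteq> B" using f by (auto simp: inj_funcset_def)
    have "(\<Sum>i\<in>B. ?T f i) = (\<Sum>i\<in>B - f ` A. ?T f i) + (\<Sum>i\<in>f ` A. ?T f i)"
      using sub assms(2) by (rule sum.subset_diff)
    also have "(\<Sum>i\<in>f ` A. ?T f i) = (\<Sum>j\<in>A. ?T f (f j))"
      using inj by (rule sum.reindex_cong) auto
    also have "(\<Sum>i\<in>B - f ` A. ?T f i) = (\<Sum>i\<in>B - f ` A. h (attach S W (insert x A) (f(x := i))))"
      using inj assms(3) by (intro sum.cong refl) (simp add: attach_fresh)
    also have "(\<Sum>j\<in>A. ?T f (f j)) = (\<Sum>j\<in>A. h (attach S (W(j := tvcat (W j) (W x))) A f))"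
      using inj by (intro sum.cong refl) (simp add: attach_image)
    finally show ?thesis .
  qed
  have "(\<Sum>f\<in>inj_funcset A B. \<Sum>i\<in>B. ?T f i)
      = (\<Sum>f\<in>inj_funcset A B. \<Sum>i\<in>B - f ` A. h (attach S W (insert x A) (f(x := i))))
        + (\<Sum>f\<in>inj_funcset A B. \<Sum>j\<in>A. h (attach S (W(j := tvcat (W j) (W x))) A f))"
    by (simp only: sum_over_B sum.distrib cong: sum.cong)
  then show ?thesis
    by (simp only: sum_inj_funcset_insert[OF assms] sum.swap[of _ A])
qed

section \<open>The extended product\<close>

locale star_extension =
  fixes st :: "('a,'k::comm_ring_1) tt \<Rightarrow> ('a,'k) tt \<Rightarrow> ('a,'k) tt"
  assumes is_star_ext: "is_star_ext st"
begin

lemma star_linear_left: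
  "f \<in> TTp \<Longrightarrow> g \<in> TTp \<Longrightarrow> h \<in> TTp \<Longrightarrow> st (vadd (vsmul c f) g) h = vadd (vsmul c (st f h)) (st g h)"
  using is_star_ext unfolding is_star_ext_def by simp

lemma star_linear_right:
  "f \<in> TTp \<Longrightarrow> g \<in> TTp \<Longrightarrow> h \<in> TTp \<Longrightarrow> st h (vadd (vsmul c f) g) = vadd (vsmul c (st h f)) (st h g)"
  using is_star_ext unfolding is_star_ext_def by simp

lemma star_emb_emb: "u \<in> TVp \<Longrightarrow> w \<in> TVp \<Longrightarrow> st (emb u) (emb w) = emb (tvcat u w)"
  using is_star_ext unfolding is_star_ext_def by simp

lemma star_one_right: "f \<in> TTp \<Longrightarrow> st f one = f"
  using is_star_ext unfolding is_star_ext_def by simp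

lemma star_one_left: "f \<in> TTp \<Longrightarrow> st one f = vsmul (eps f) one"
  using is_star_ext unfolding is_star_ext_def by simp

lemma star_bar_emb_right:
  "f \<in> TTp \<Longrightarrow> g \<in> TTp \<Longrightarrow> y \<in> TVp \<Longrightarrow> st f (bar g (emb y)) = vsub (st (st f g) (emb y)) (st f (st g (emb y)))"
  using is_star_ext unfolding is_star_ext_def by simp

lemma star_bar_left:
  "f \<in> TTp \<Longrightarrow> g \<in> TTp \<Longrightarrow> h \<in> TTp \<Longrightarrow> st (bar f g) h = tsum (Delta h) (\<lambda>a b. bar (st f a) (st g b))"
  using is_star_ext unfolding is_star_ext_def by simp

lemma star_vsum_left:
  "finite A \<Longrightarrow> (\<And>a. a \<in> A \<Longrightarrow> g a \<in> TTp) \<Longrightarrow> h \<in> TTp \<Longrightarrow> st (vsum g A) h = vsum (\<lambda>a. st (g a) h) A"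
  by (rule linear_vsum_simple[where L = "\<lambda>f. st f h"]) (simp_all add: star_linear_left)

lemma star_vsum_right:
  "finite A \<Longrightarrow> (\<And>a. a \<in> A \<Longrightarrow> g a \<in> TTp) \<Longrightarrow> h \<in> TTp \<Longrightarrow> st h (vsum g A) = vsum (\<lambda>a. st h (g a)) A"
  by (rule linear_vsum_simple[where L = "st h"]) (simp_all add: star_linear_right)

lemma star_emb_delta_expansion:
  assumes "f \<in> TTp" "y \<in> TVp"
  shows "vsum (\<lambda>v. vsmul (y v) (st f (delta [v]))) {v. y v \<noteq> 0} = st f (emb y)"
proof -
  have "finite {v. y v \<noteq> 0}" "\<And>v. v \<in> {v. y v \<noteq> 0} \<Longrightarrow> delta [v] \<in> TTp"
    using assms(2) by (auto simp: TVp_def fsupp_def intro: delta_TTp)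
  then show ?thesis
    unfolding emb_eq_vsum_delta[OF assms(2)]
    by (intro linear_vsum[where L = "st f", symmetric]) (simp_all add: star_linear_right assms(1))
qed

lemma star_emb_derivation:
  assumes "f \<in> TTp" "g \<in> TTp" "y \<in> TVp"
  shows "st (bar f g) (emb y) = vadd (bar (st f (emb y)) g) (bar f (st g (emb y)))"
proof -
  have "st (bar f g) (emb y)
      = vadd (vsum (\<lambda>v. vsmul (y v) (bar (st f (delta [v])) g)) {v. y v \<noteq> 0})
             (vsum (\<lambda>v. vsmul (y v) (bar f (st g (delta [v])))) {v. y v \<noteq> 0})"
    using assms by (simp add: star_bar_left emb_TTp tsum_Delta_emb star_one_right)
  also have "\<dots> = vadd (bar (vsum (\<lambda>v. vsmul (y v) (st f (delta [v]))) {v. y v \<noteq> 0}) g)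
                       (bar f (vsum (\<lambda>v. vsmul (y v) (st g (delta [v]))) {v. y v \<noteq> 0}))"
    by (simp add: bar_vsum_left bar_vsum_right bar_vsmul_left bar_vsmul_right)
  finally show ?thesis
    using assms by (simp add: star_emb_delta_expansion)
qed

lemma star_sentence_emb:
  assumes "\<And>i. i \<in> {1..m} \<Longrightarrow> X i \<in> TVp" "y \<in> TVp"
  shows "st (sentence X m) (emb y) = vsum (\<lambda>i. sentence (X(i := tvcat (X i) y)) m) {1..m}"
  using assms(1)
proof (induction m)
  case 0
  have "eps (emb y) = 0" by (simp add: eps_def emb_def)
  then show ?case
    using star_one_left[OF emb_TTp[OF assms(2)]] by (simp add: sentence_0 fun_eq_iff vsmul_def vsum_def)
next
  case (Suc m)
  let ?X' = "\<lambda>i. X(i := tvcat (X i) y)"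
  have XT: "X i \<in> TVp" if "i \<in> {1..m}" for i using Suc.prems that by simp
  have last: "X (Suc m) \<in> TVp" using Suc.prems by simp
  have XmT: "sentence X m \<in> TTp" using XT by (rule sentence_TTp)
  have "st (sentence X (Suc m)) (emb y)
      = vadd (bar (st (sentence X m) (emb y)) (emb (X (Suc m))))
             (bar (sentence X m) (st (emb (X (Suc m))) (emb y)))"
    unfolding sentence_Suc using XmT emb_TTp[OF last] assms(2) by (rule star_emb_derivation)
  also have "st (sentence X m) (emb y) = vsum (\<lambda>i. sentence (?X' i) m) {1..m}"
    using XT by (rule Suc.IH)
  also have "st (emb (X (Suc m))) (emb y) = emb (tvcat (X (Suc m)) y)"
    using last assms(2) by (rule star_emb_emb)
  also have "bar (vsum (\<lambda>i. sentence (?X' i) m) {1..m}) (emb (X (Suc m)))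
      = vsum (\<lambda>i. sentence (?X' i) (Suc m)) {1..m}"
    unfolding bar_vsum_left by (intro vsum_cong refl) (simp add: sentence_Suc)
  also have "bar (sentence X m) (emb (tvcat (X (Suc m)) y)) = sentence (?X' (Suc m)) (Suc m)"
  proof -
    have "sentence (?X' (Suc m)) m = sentence X m" by (rule sentence_cong) simp
    then show ?thesis by (simp add: sentence_Suc)
  qed
  finally show ?case
    by (simp only: vsum_atLeastAtMost_Suc)
qed

lemma star_vsum_sentence_emb:
  assumes "finite F" "\<And>f i. f \<in> F \<Longrightarrow> i \<in> {1..n} \<Longrightarrow> Y f i \<in> TVp" "y \<in> TVp"
  shows "st (vsum (\<lambda>f. sentence (Y f) n) F) (emb y)
       = vsum (\<lambda>f. vsum (\<lambda>i. sentence ((Y f)(i := tvcat (Y f i) y)) n) {1..n}) F"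
proof -
  have "st (vsum (\<lambda>f. sentence (Y f) n) F) (emb y) = vsum (\<lambda>f. st (sentence (Y f) n) (emb y)) F"
    using assms by (intro star_vsum_left sentence_TTp emb_TTp)
  also have "\<dots> = vsum (\<lambda>f. vsum (\<lambda>i. sentence ((Y f)(i := tvcat (Y f i) y)) n) {1..n}) F"
    using assms by (intro vsum_cong refl star_sentence_emb)
  finally show ?thesis .
qed

lemma star_star_sentence_emb:
  assumes "f \<in> TTp" "\<And>j. j \<in> {1..k} \<Longrightarrow> W j \<in> TVp" "y \<in> TVp"
  shows "st f (st (sentence W k) (emb y)) = vsum (\<lambda>j. st f (sentence (W(j := tvcat (W j) y)) k)) {1..k}"
proof -
  have "st (sentence W k) (emb y) = vsum (\<lambda>j. sentence (W(j := tvcat (W j) y)) k) {1..k}"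
    using assms(2,3) by (rule star_sentence_emb)
  then show ?thesis
    using assms by (simp only:) (rule star_vsum_right, auto intro!: sentence_TTp tvcat_TVp)
qed

theorem star_sentence_sentence:
  assumes "\<And>i. i \<in> {1..n} \<Longrightarrow> S i \<in> TVp" "\<And>j. j \<in> {1..k} \<Longrightarrow> W j \<in> TVp"
  shows "st (sentence S n) (sentence W k)
       = vsum (\<lambda>f. sentence (attach S W {1..k} f) n) (inj_funcset {1..k} {1..n})"
  using assms(2)
proof (induction k arbitrary: W)
  case 0
  have "attach S W {} (\<lambda>_. undefined) = S" by (simp add: fun_eq_iff attach_def)
  then show ?case
    using star_one_right[OF sentence_TTp[OF assms(1)]] by (simp add: sentence_0 inj_funcset_empty vsum_def)
next
  case (Suc k)
  let ?y = "W (Suc k)"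
  let ?F = "inj_funcset {1..k} {1..n}"
  let ?W' = "\<lambda>j. W(j := tvcat (W j) ?y)"
  let ?A = "vsum (\<lambda>f. vsum (\<lambda>i. sentence ((attach S W {1..k} f)(i := tvcat (attach S W {1..k} f i) ?y)) n) {1..n}) ?F"
  let ?B = "vsum (\<lambda>j. vsum (\<lambda>f. sentence (attach S (?W' j) {1..k} f) n) ?F) {1..k}"
  have W: "W j \<in> TVp" if "j \<in> {1..k}" for j using Suc.prems that by simp
  have y: "?y \<in> TVp" using Suc.prems by simp
  have SnT: "sentence S n \<in> TTp" using assms(1) by (rule sentence_TTp)
  have "st (sentence S n) (sentence W (Suc k))
      = vsub (st (st (sentence S n) (sentence W k)) (emb ?y)) (st (sentence S n) (st (sentence W k) (emb ?y)))"
    unfolding sentence_Suc using SnT sentence_TTp[OF W] y by (rule star_bar_emb_right)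
  also have "st (sentence S n) (sentence W k) = vsum (\<lambda>f. sentence (attach S W {1..k} f) n) ?F"
    using W by (rule Suc.IH)
  also have "st \<dots> (emb ?y) = ?A"
    using assms(1) W y by (intro star_vsum_sentence_emb finite_inj_funcset attach_TVp) auto
  also have "st (sentence S n) (st (sentence W k) (emb ?y)) = vsum (\<lambda>j. st (sentence S n) (sentence (?W' j) k)) {1..k}"
    using SnT W y by (rule star_star_sentence_emb)
  also have "\<dots> = ?B"
    using W y by (intro vsum_cong refl Suc.IH) (auto intro: tvcat_TVp)
  also have "vsub ?A ?B = vsum (\<lambda>f. sentence (attach S W {1..Suc k} f) n) (inj_funcset {1..Suc k} {1..n})"
  proof
    fix s
    show "vsub ?A ?B s = vsum (\<lambda>f. sentence (attach S W {1..Suc k} f) n) (inj_funcset {1..Suc k} {1..n}) s"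
      using sum_absorb_into_attach[of "{1..k}" "{1..n}" "Suc k" "\<lambda>X. sentence X n s" S W]
      by (simp add: vsub_def vsum_def atLeastAtMostSuc_conv)
  qed
  finally show ?case .
qed

lemma star_emb_W_sub_fiber:
  assumes "inj_on f A" "S i \<in> TVp" "\<And>j. j \<in> A \<Longrightarrow> W j \<in> TVp"
  shows "st (emb (S i)) (W_sub W {j\<in>A. f j = i}) = emb (attach S W A f i)"
proof (cases "i \<in> f ` A")
  case True
  then obtain j where j: "j \<in> A" "i = f j" by auto
  then have "{j\<in>A. f j = i} = {j}" using assms(1) by (auto simp: inj_on_eq_iff)
  then show ?thesis
    using j assms by (simp add: W_sub_def bars_singleton star_emb_emb attach_def inv_into_f_f)
next
  case False
  then have "{j\<in>A. f j = i} = {}" by blast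
  then have "W_sub W {j\<in>A. f j = i} = one" by (simp only: W_sub_def bars_def) simp
  then show ?thesis
    using False assms(2) by (simp add: star_one_right emb_TTp attach_def)
qed

end

theorem proposition4p7:
  fixes st :: "('a,'k::field) tt \<Rightarrow> ('a,'k) tt \<Rightarrow> ('a,'k) tt"
    and S W :: "nat \<Rightarrow> ('a,'k) tv"
    and n k :: nat
  assumes "is_star_ext st"
    and "n \<ge> 1" and "k \<ge> 1"
    and "\<forall>i\<in>{1..n}. S i \<in> TVp"
    and "\<forall>j\<in>{1..k}. W j \<in> TVp"
  shows "st (bars (map (\<lambda>i. emb (S i)) [1..<n+1])) (bars (map (\<lambda>j. emb (W j)) [1..<k+1]))
         = vsum (\<lambda>f. bars (map (\<lambda>i. st (emb (S i)) (W_sub W {j\<in>{1..k}. f j = i})) [1..<n+1]))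
                {f. f \<in> {1..k} \<rightarrow>\<^sub>E {1..n} \<and> inj_on f {1..k}}"
proof -
  interpret star_extension st by standard (rule assms(1))
  have factors: "st (emb (S i)) (W_sub W {j\<in>{1..k}. f j = i}) = emb (attach S W {1..k} f i)"
    if "f \<in> inj_funcset {1..k} {1..n}" "i \<in> set [1..<n+1]" for f i
    using that assms(4,5) by (intro star_emb_W_sub_fiber) (auto simp: inj_funcset_def)
  have "vsum (\<lambda>f. bars (map (\<lambda>i. st (emb (S i)) (W_sub W {j\<in>{1..k}. f j = i})) [1..<n+1]))
          (inj_funcset {1..k} {1..n})
      = vsum (\<lambda>f. sentence (attach S W {1..k} f) n) (inj_funcset {1..k} {1..n})"
    unfolding sentence_def by (intro vsum_cong refl arg_cong[where f = bars] map_cong) (blast intro: factors)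
  also have "\<dots> = st (sentence S n) (sentence W k)"
    by (rule star_sentence_sentence[symmetric]) (use assms(4,5) in auto)
  finally show ?thesis
    by (simp add: sentence_def inj_funcset_def)
qed

end
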